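(* Let $X_i=(K_i,T_{K_i},N_{i,K_i})$, $i=1,\dots,n$, be observed panel count data, let $t_1<\dots<t_m$ be the ordered distinct points of $\{T_{K_i,j}: j=1,\dots,K_i,\ i=1,\dots,n\}$, and let $\hat{\mathbf u}=(\hat u_1,\dots,\hat u_m)=(\hat\Lambda_n(t_1),\dots,\hat\Lambda_n(t_m))$, where $\hat\Lambda_n$ is the NPMLE, i.e. $\hat{\mathbf u}$ maximizes $\phi(\mathbf u\mid\mathbf X)$ over $\Omega=\{\mathbf u: 0\le u_1\le\dots\le u_m<\infty\}$ (with finite maximal value). Then for every real function $\varphi:\mathbb R\to\mathbb R$, $$\sum_{\ell=1}^m \varphi(\hat u_\ell)\Big\{\sum_{i=1}^n \phi_{i,\ell}(\hat{\mathbf u})\Big\}=0.$$ Equivalently, $$\sum_{i=1}^n\Big[\sum_{j=1}^{K_i-1}\varphi(\hat\Lambda_n(T_{K_i,j}))\hat\Lambda_n(T_{K_i,j})\Big\{\tfrac{\Delta N_i(T_{K_i,j+1})}{\Delta\hat\Lambda_n(T_{K_i,j+1})}-\tfrac{\Delta N_i(T_{K_i,j})}{\Delta\hat\Lambda_n(T_{K_i,j})}\Big\}+\varphi(\hat\Lambda_n(T_{K_i,K_i}))\hat\Lambda_n(T_{K_i,K_i})\Big\{1-\tfrac{\Delta N_i(T_{K_i,K_i})}{\Delta\hat\Lambda_n(T_{K_i,K_i})}\Big\}\Big]=0 .$$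
   Context: Panel count data: for subject $i$, $K_i\ge1$ is the number of observation times, $0=T_{K_i,0}<T_{K_i,1}<\dots<T_{K_i,K_i}$ are the observation times, and $N_{i,K_i}=(N_i(T_{K_i,1}),\dots,N_i(T_{K_i,K_i}))$ are the observed values of a counting process $N_i$ with $N_i(0)=0$. Write $\Delta N_i(T_{K_i,j})=N_i(T_{K_i,j})-N_i(T_{K_i,j-1})$ and $\Delta\Lambda(T_{K,j})=\Lambda(T_{K,j})-\Lambda(T_{K,j-1})$ (with $\Lambda(0)=0$). Define the rank function $R(T_{K_i,j})=s$ iff $T_{K_i,j}=t_s$, with $u_{R(T_{K_i,0})}:=0$. The log-likelihood is $$\phi(\mathbf u\mid\mathbf X)=\sum_{i=1}^n\Big[\sum_{j=1}^{K_i}\Delta N_i(T_{K_i,j})\log\{u_{R(T_{K_i,j})}-u_{R(T_{K_i,j-1})}\}-u_{R(T_{K_i,K_i})}\Big].$$ For $\ell=1,\dots,m$, $$\phi_{i,\ell}(\mathbf u)=\sum_{j=1}^{K_i-1}\Big\{\frac{\Delta N_i(T_{K_i,j})}{u_{R(T_{K_i,j})}-u_{R(T_{K_i,j-1})}}-\frac{\Delta N_i(T_{K_i,j+1})}{u_{R(T_{K_i,j+1})}-u_{R(T_{K_i,j})}}\Big\}1_{\{T_{K_i,j}=t_\ell\}}+\Big\{\frac{\Delta N_i(T_{K_i,K_i})}{u_{R(T_{K_i,K_i})}-u_{R(T_{K_i,K_i-1})}}-1\Big\}1_{\{T_{K_i,K_i}=t_\ell\}},$$ so that $\sum_i\phi_{i,\ell}=\partial\phi(\mathbf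 u\mid\mathbf X)/\partial u_\ell$. Terms of the form $0/0$ (zero count over a zero increment) are interpreted as $0$. The NPMLE $\hat\Lambda_n$ is the nondecreasing nonnegative step function with jumps only at $t_1,\dots,t_m$ whose values at $t_1,\dots,t_m$ are $\hat{\mathbf u}$. *)

theory Defs
  imports Complex_Main "HOL-Library.Extended_Real"
begin

text \<open>Panel count data for subjects i = 1..n: K i observation times,
  T i 0 = 0 < T i 1 < ... < T i (K i), observed counts N i j (N i 0 = 0).
  t 1 < ... < t m are the ordered distinct observation times; u l is the
  value at t l (indices 1..m).\<close>

definition rank :: "(nat \<Rightarrow> real) \<Rightarrow> nat \<Rightarrow> real \<Rightarrow> nat" where
  "rank t m x = (THE s. s \<in> {1..m} \<and> t s = x)"

definition uval :: "(nat \<Rightarrow> real) \<Rightarrow> nat \<Rightarrow> (nat \<Rightarrow> nat \<Rightarrow> real) \<Rightarrow> (nat \<Rightarrow> real)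
    \<Rightarrow> nat \<Rightarrow> nat \<Rightarrow> real" where
  "uval t m T u i j = (if j = 0 then 0 else u (rank t m (T i j)))"

definition dN :: "(nat \<Rightarrow> nat \<Rightarrow> nat) \<Rightarrow> nat \<Rightarrow> nat \<Rightarrow> real" where
  "dN N i j = real (N i j) - real (N i (j - 1))"

definition dU :: "(nat \<Rightarrow> real) \<Rightarrow> nat \<Rightarrow> (nat \<Rightarrow> nat \<Rightarrow> real) \<Rightarrow> (nat \<Rightarrow> real)
    \<Rightarrow> nat \<Rightarrow> nat \<Rightarrow> real" where
  "dU t m T u i j = uval t m T u i j - uval t m T u i (j - 1)"

text \<open>One summand  dN * log(increment)  of the log-likelihood, valued in the
  extended reals with the conventions 0 * log 0 = 0 and log 0 = -infinity.\<close>
definition llterm :: "real \<Rightarrow> real \<Rightarrow> ereal" where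
  "llterm a d = (if d > 0 then ereal (a * ln d) else if a = 0 then 0 else -\<infinity>)"

definition loglik :: "nat \<Rightarrow> (nat \<Rightarrow> nat) \<Rightarrow> (nat \<Rightarrow> nat \<Rightarrow> real) \<Rightarrow> (nat \<Rightarrow> nat \<Rightarrow> nat)
    \<Rightarrow> (nat \<Rightarrow> real) \<Rightarrow> nat \<Rightarrow> (nat \<Rightarrow> real) \<Rightarrow> ereal" where
  "loglik n K T N t m u =
     (\<Sum>i=1..n. (\<Sum>j=1..K i. llterm (dN N i j) (dU t m T u i j))
                 - ereal (uval t m T u i (K i)))"

definition Omega :: "nat \<Rightarrow> (nat \<Rightarrow> real) set" where
  "Omega m = {u. (1 \<le> m \<longrightarrow> 0 \<le> u 1) \<and> (\<forall>l. 1 \<le> l \<and> l < m \<longrightarrow> u l \<le> u (Suc l))}"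

end

theory Submission
  imports Defs
begin

(* Write g(x) = phi(x) * x and perturb the maximiser u along
   v_eps(l) = u_l + eps * g(u_l).  Since g(0) = 0, ties u_l = u_{l+1} and the
   boundary value u_1 = 0 are preserved while strict gaps survive small eps, so
   v_eps stays in Omega for |eps| small.  Finiteness of the maximal likelihood
   forces every increment carrying a positive count to be positive; hence near
   eps = 0 the log-likelihood of v_eps is a real, differentiable function of eps
   with a local maximum at 0, and its derivative there -- the score of u in the
   direction g -- vanishes.  A summation by parts over the observation times of
   each subject turns this score into minus the sum in the theorem. *)

text \<open>A finite sum of extended reals with a \<open>-\<infinity>\<close> summand and no \<open>\<infinity>\<close> summand is \<open>-\<infinity>\<close>;
  this is how a single vanishing increment ruins the whole likelihood.\<close>
lemma sum_ereal_MInfty: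
  fixes f :: "'a \<Rightarrow> ereal"
  assumes "finite A" "\<forall>x\<in>A. f x \<noteq> \<infinity>" "a \<in> A" "f a = -\<infinity>"
  shows "sum f A = -\<infinity>"
proof -
  have "sum f (A - {a}) \<noteq> \<infinity>" using assms by (simp add: sum_Pinfty)
  moreover have "sum f A = f a + sum f (A - {a})"
    using assms by (simp add: sum.remove)
  ultimately show ?thesis using assms by simp
qed

lemma eventually_pos_perturbation:
  fixes a c :: real
  assumes "0 < a"
  shows "eventually (\<lambda>\<epsilon>. 0 < a + \<epsilon> * c) (nhds 0)"
proof -
  have "((\<lambda>\<epsilon>. a + \<epsilon> * c) \<longlongrightarrow> a + 0 * c) (nhds 0)"
    by (intro tendsto_intros filterlim_ident)
  then show ?thesis using assms by (auto dest: order_tendstoD(1))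
qed

lemma deriv_zero_at_local_max:
  fixes F :: "real \<Rightarrow> real"
  assumes "(F has_real_derivative D) (at x)" "eventually (\<lambda>y. F y \<le> F x) (nhds x)"
  shows "D = 0"
proof -
  obtain d where "0 < d" "\<forall>y. dist y x < d \<longrightarrow> F y \<le> F x"
    using assms(2) by (auto simp: eventually_nhds_metric)
  then show ?thesis
    by (intro DERIV_local_max[OF assms(1)]) (auto simp: dist_real_def abs_minus_commute)
qed

lemma summation_by_parts:
  fixes r g :: "nat \<Rightarrow> real"
  assumes "g 0 = 0" "1 \<le> k"
  shows "(\<Sum>j=1..k. r j * (g j - g (j - 1))) - g k
       = -((\<Sum>j=1..k - 1. g j * (r (Suc j) - r j)) + g k * (1 - r k))"
  using assms(2)
proof (induction k rule: dec_induct)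
  case base
  then show ?case using assms(1) by (simp add: algebra_simps)
next
  case (step k)
  have "(\<Sum>j=1..Suc k. r j * (g j - g (j - 1)))
      = (\<Sum>j=1..k. r j * (g j - g (j - 1))) + r (Suc k) * (g (Suc k) - g k)"
    by simp
  moreover have "(\<Sum>j=1..k. g j * (r (Suc j) - r j))
      = (\<Sum>j=1..k - 1. g j * (r (Suc j) - r j)) + g k * (r (Suc k) - r k)"
    using step.hyps by (cases k) auto
  ultimately show ?case using step.IH by (simp add: algebra_simps)
qed

definition loglik_real :: "nat \<Rightarrow> (nat \<Rightarrow> nat) \<Rightarrow> (nat \<Rightarrow> nat \<Rightarrow> real) \<Rightarrow> (nat \<Rightarrow> nat \<Rightarrow> nat)
    \<Rightarrow> (nat \<Rightarrow> real) \<Rightarrow> nat \<Rightarrow> (nat \<Rightarrow> real) \<Rightarrow> real" where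
  "loglik_real n K T N t m u =
     (\<Sum>i=1..n. (\<Sum>j=1..K i. if dN N i j = 0 then 0 else dN N i j * ln (dU t m T u i j))
                 - uval t m T u i (K i))"

definition charged_increments_pos ::
    "nat \<Rightarrow> (nat \<Rightarrow> nat) \<Rightarrow> (nat \<Rightarrow> nat \<Rightarrow> real) \<Rightarrow> (nat \<Rightarrow> nat \<Rightarrow> nat)
      \<Rightarrow> (nat \<Rightarrow> real) \<Rightarrow> nat \<Rightarrow> (nat \<Rightarrow> real) \<Rightarrow> bool" where
  "charged_increments_pos n K T N t m u \<longleftrightarrow>
     (\<forall>i\<in>{1..n}. \<forall>j\<in>{1..K i}. dN N i j \<noteq> 0 \<longrightarrow> 0 < dU t m T u i j)"

lemma loglik_eq_loglik_real:
  assumes "charged_increments_pos n K T N t m u"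
  shows "loglik n K T N t m u = ereal (loglik_real n K T N t m u)"
proof -
  have "llterm (dN N i j) (dU t m T u i j)
      = ereal (if dN N i j = 0 then 0 else dN N i j * ln (dU t m T u i j))"
    if "i \<in> {1..n}" "j \<in> {1..K i}" for i j
    using assms that by (auto simp: llterm_def charged_increments_pos_def)
  then show ?thesis
    unfolding loglik_def loglik_real_def by (simp del: sum_ereal) simp
qed

text \<open>If the likelihood is finite, no increment carrying a count vanishes
  (otherwise the corresponding \<open>log 0 = -\<infinity>\<close> term makes the likelihood \<open>-\<infinity>\<close>).\<close>
lemma loglik_finite_imp_charged_increments_pos:
  assumes "loglik n K T N t m u \<noteq> -\<infinity>"
  shows "charged_increments_pos n K T N t m u"
  unfolding charged_increments_pos_def
proof (intro ballI impI, rule ccontr)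
  fix i j assume i: "i \<in> {1..n}" and j: "j \<in> {1..K i}" and "dN N i j \<noteq> 0"
    and "\<not> 0 < dU t m T u i j"
  have no_Pinf: "llterm a d \<noteq> \<infinity>" for a d by (simp add: llterm_def)
  define L where "L i' = (\<Sum>j=1..K i'. llterm (dN N i' j) (dU t m T u i' j))" for i'
  have "L i = -\<infinity>"
    unfolding L_def
    by (rule sum_ereal_MInfty[OF _ _ j]) (use \<open>dN N i j \<noteq> 0\<close> \<open>\<not> 0 < dU t m T u i j\<close> no_Pinf
        in \<open>auto simp: llterm_def\<close>)
  moreover have "L i' - ereal (uval t m T u i' (K i')) \<noteq> \<infinity>" for i'
  proof -
    have "L i' \<noteq> \<infinity>" using no_Pinf by (simp add: L_def sum_Pinfty)
    then show ?thesis by (cases "L i'") auto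
  qed
  ultimately have "loglik n K T N t m u = -\<infinity>"
    unfolding loglik_def L_def[symmetric] by (intro sum_ereal_MInfty[OF _ _ i]) auto
  with assms show False by simp
qed

definition perturb :: "(real \<Rightarrow> real) \<Rightarrow> (nat \<Rightarrow> real) \<Rightarrow> real \<Rightarrow> nat \<Rightarrow> real" where
  "perturb g u \<epsilon> l = u l + \<epsilon> * g (u l)"

lemma uval_perturb:
  assumes "g 0 = 0"
  shows "uval t m T (perturb g u \<epsilon>) i j = uval t m T u i j + \<epsilon> * g (uval t m T u i j)"
  using assms by (simp add: uval_def perturb_def)

lemma dU_perturb:
  assumes "g 0 = 0"
  shows "dU t m T (perturb g u \<epsilon>) i j = dU t m T u i j
           + \<epsilon> * (g (uval t m T u i j) - g (uval t m T u i (j - 1)))"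
  using assms by (simp add: dU_def uval_perturb algebra_simps)

text \<open>Since \<open>g 0 = 0\<close>, small perturbations keep the ordering constraints of Omega:
  ties and a zero first value are preserved, strict inequalities survive.\<close>
lemma eventually_perturb_in_Omega:
  assumes "u \<in> Omega m" "g 0 = 0"
  shows "eventually (\<lambda>\<epsilon>. perturb g u \<epsilon> \<in> Omega m) (nhds 0)"
proof -
  have ordered: "eventually (\<lambda>\<epsilon>. perturb g u \<epsilon> l \<le> perturb g u \<epsilon> (Suc l)) (nhds 0)"
    if l: "l \<in> {1..<m}" for l
  proof (cases "u l = u (Suc l)")
    case True then show ?thesis by (simp add: perturb_def)
  next
    case False
    then have "0 < u (Suc l) - u l" using assms(1) l by (auto simp: Omega_def)
    from eventually_pos_perturbation[OF this, of "g (u (Suc l)) - g (u l)"]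
    show ?thesis by (rule eventually_mono) (simp add: perturb_def algebra_simps)
  qed
  have first_nonneg: "eventually (\<lambda>\<epsilon>. 1 \<le> m \<longrightarrow> 0 \<le> perturb g u \<epsilon> 1) (nhds 0)"
  proof (cases "1 \<le> m \<and> u 1 \<noteq> 0")
    case True
    then have "0 < u 1" using assms(1) by (auto simp: Omega_def)
    from eventually_pos_perturbation[OF this, of "g (u 1)"]
    show ?thesis by (rule eventually_mono) (simp add: perturb_def)
  qed (use assms(2) in \<open>auto simp: perturb_def\<close>)
  have "eventually (\<lambda>\<epsilon>. \<forall>l\<in>{1..<m}. perturb g u \<epsilon> l \<le> perturb g u \<epsilon> (Suc l)) (nhds 0)"
    using ordered by (intro eventually_ball_finite) auto
  with first_nonneg show ?thesis
    by eventually_elim (auto simp: Omega_def)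
qed

lemma eventually_perturb_charged_increments_pos:
  assumes "charged_increments_pos n K T N t m u" "g 0 = 0"
  shows "eventually (\<lambda>\<epsilon>. charged_increments_pos n K T N t m (perturb g u \<epsilon>)) (nhds 0)"
proof -
  have "eventually (\<lambda>\<epsilon>. dN N i j \<noteq> 0 \<longrightarrow> 0 < dU t m T (perturb g u \<epsilon>) i j) (nhds 0)"
    if "i \<in> {1..n}" "j \<in> {1..K i}" for i j
  proof (cases "dN N i j = 0")
    case False
    then have "0 < dU t m T u i j"
      using assms(1) that by (auto simp: charged_increments_pos_def)
    from eventually_pos_perturbation[OF this,
        of "g (uval t m T u i j) - g (uval t m T u i (j - 1))"] show ?thesis
      by (rule eventually_mono) (simp add: dU_perturb[where g=g, OF assms(2)])
  qed simp
  then show ?thesis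
    unfolding charged_increments_pos_def by (intro eventually_ball_finite ballI) auto
qed

text \<open>Derivative at \<open>\<epsilon> = 0\<close> of the log-likelihood along \<open>perturb\<close>; in the notation
  of the paper it equals \<open>\<Sum>\<^sub>\<ell> g(u\<^sub>\<ell>) \<Sum>\<^sub>i \<phi>\<^sub>i\<^sub>,\<^sub>\<ell>(u)\<close>.\<close>
definition score :: "nat \<Rightarrow> (nat \<Rightarrow> nat) \<Rightarrow> (nat \<Rightarrow> nat \<Rightarrow> real) \<Rightarrow> (nat \<Rightarrow> nat \<Rightarrow> nat)
    \<Rightarrow> (nat \<Rightarrow> real) \<Rightarrow> nat \<Rightarrow> (nat \<Rightarrow> real) \<Rightarrow> (real \<Rightarrow> real) \<Rightarrow> real" where
  "score n K T N t m u g =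
     (\<Sum>i=1..n. (\<Sum>j=1..K i. dN N i j / dU t m T u i j
                   * (g (uval t m T u i j) - g (uval t m T u i (j - 1))))
                 - g (uval t m T u i (K i)))"

lemma has_derivative_loglik_real_perturb:
  assumes "charged_increments_pos n K T N t m u" "g 0 = 0"
  shows "((\<lambda>\<epsilon>. loglik_real n K T N t m (perturb g u \<epsilon>))
           has_real_derivative score n K T N t m u g) (at 0)"
  unfolding loglik_real_def score_def dU_perturb[where g=g, OF assms(2)] uval_perturb[where g=g, OF assms(2)]
proof (intro DERIV_sum DERIV_diff)
  fix i j assume "i \<in> {1..n}" "j \<in> {1..K i}"
  then show "((\<lambda>\<epsilon>. if dN N i j = 0 then 0 else dN N i j * ln (dU t m T u i j
                 + \<epsilon> * (g (uval t m T u i j) - g (uval t m T u i (j - 1)))))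
       has_real_derivative dN N i j / dU t m T u i j
                 * (g (uval t m T u i j) - g (uval t m T u i (j - 1)))) (at 0)"
    using assms(1) by (cases "dN N i j = 0")
      (auto simp: charged_increments_pos_def intro!: derivative_eq_intros)
qed (auto intro!: derivative_eq_intros)

theorem score_zero_at_maximiser:
  assumes "u \<in> Omega m" "loglik n K T N t m u \<noteq> -\<infinity>"
    and "\<forall>v\<in>Omega m. loglik n K T N t m v \<le> loglik n K T N t m u"
    and "g 0 = 0"
  shows "score n K T N t m u g = 0"
proof -
  define F where "F \<epsilon> = loglik_real n K T N t m (perturb g u \<epsilon>)" for \<epsilon>
  have pos: "charged_increments_pos n K T N t m u"
    using assms(2) by (rule loglik_finite_imp_charged_increments_pos)
  have u_eq: "perturb g u 0 = u" by (simp add: perturb_def fun_eq_iff)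
  have "eventually (\<lambda>\<epsilon>. F \<epsilon> \<le> F 0) (nhds 0)"
    using eventually_perturb_in_Omega[where g=g, OF assms(1,4)]
      eventually_perturb_charged_increments_pos[where g=g, OF pos assms(4)]
  proof eventually_elim
    case (elim \<epsilon>)
    then have "loglik n K T N t m (perturb g u \<epsilon>) \<le> loglik n K T N t m u"
      using assms(3) by blast
    then show ?case
      using loglik_eq_loglik_real[OF elim(2)] loglik_eq_loglik_real[OF pos]
      by (simp add: F_def u_eq)
  qed
  with has_derivative_loglik_real_perturb[where g=g, OF pos assms(4)] show ?thesis
    unfolding F_def[symmetric] by (rule deriv_zero_at_local_max)
qed

lemma score_by_parts:
  assumes "\<forall>i\<in>{1..n}. 1 \<le> K i"
  shows "score n K T N t m u (\<lambda>x. \<phi> x * x) = - (\<Sum>i=1..n.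
            (\<Sum>j=1..K i - 1. \<phi> (uval t m T u i j) * uval t m T u i j *
                (dN N i (Suc j) / dU t m T u i (Suc j) - dN N i j / dU t m T u i j))
            + \<phi> (uval t m T u i (K i)) * uval t m T u i (K i) *
                (1 - dN N i (K i) / dU t m T u i (K i)))"
  unfolding score_def sum_negf[symmetric]
proof (rule sum.cong[OF refl])
  fix i assume "i \<in> {1..n}"
  then have "1 \<le> K i" using assms by blast
  from summation_by_parts[OF _ this, of "\<lambda>j. \<phi> (uval t m T u i j) * uval t m T u i j"
      "\<lambda>j. dN N i j / dU t m T u i j"]
  show "(\<Sum>j=1..K i. dN N i j / dU t m T u i j * (\<phi> (uval t m T u i j) * uval t m T u i j
            - \<phi> (uval t m T u i (j - 1)) * uval t m T u i (j - 1)))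
          - \<phi> (uval t m T u i (K i)) * uval t m T u i (K i)
      = - ((\<Sum>j=1..K i - 1. \<phi> (uval t m T u i j) * uval t m T u i j *
              (dN N i (Suc j) / dU t m T u i (Suc j) - dN N i j / dU t m T u i j))
          + \<phi> (uval t m T u i (K i)) * uval t m T u i (K i) *
              (1 - dN N i (K i) / dU t m T u i (K i)))"
    by (simp add: uval_def)
qed

theorem lemma1:
  fixes n m :: nat and K :: "nat \<Rightarrow> nat" and T :: "nat \<Rightarrow> nat \<Rightarrow> real"
    and N :: "nat \<Rightarrow> nat \<Rightarrow> nat" and t u :: "nat \<Rightarrow> real" and \<phi> :: "real \<Rightarrow> real"
  assumes K_pos: "\<forall>i\<in>{1..n}. 1 \<le> K i"
    and T_zero: "\<forall>i\<in>{1..n}. T i 0 = 0"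
    and T_incr: "\<forall>i\<in>{1..n}. \<forall>j<K i. T i j < T i (Suc j)"
    and N_zero: "\<forall>i\<in>{1..n}. N i 0 = 0"
    and N_mono: "\<forall>i\<in>{1..n}. \<forall>j<K i. N i j \<le> N i (Suc j)"
    and t_mono: "strict_mono_on {1..m} t"
    and t_range: "t ` {1..m} = {T i j | i j. i \<in> {1..n} \<and> j \<in> {1..K i}}"
    and u_in: "u \<in> Omega m"
    and u_finite: "loglik n K T N t m u \<noteq> -\<infinity>"
    and u_max: "\<forall>v\<in>Omega m. loglik n K T N t m v \<le> loglik n K T N t m u"
  shows "(\<Sum>i=1..n.
            (\<Sum>j=1..K i - 1. \<phi> (uval t m T u i j) * uval t m T u i j *
                (dN N i (Suc j) / dU t m T u i (Suc j) - dN N i j / dU t m T u i j))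
            + \<phi> (uval t m T u i (K i)) * uval t m T u i (K i) *
                (1 - dN N i (K i) / dU t m T u i (K i))) = 0"
proof -
  have "score n K T N t m u (\<lambda>x. \<phi> x * x) = 0"
    using u_in u_finite u_max by (rule score_zero_at_maximiser) simp
  with score_by_parts[OF K_pos, of T N t m u \<phi>] show ?thesis by simp
qed

end
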